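(* In the meta-algorithm described in the context (with an arbitrary commitment subroutine), every honest search step $q$ whose current node $I^q$ is not a leaf satisfies $\Phi_{q+1}=\Phi_q-1$.
   Context: Robust dynamic pricing: there are $T$ rounds and an unknown valuation $v^\star\in[0,1)$. At each round $t$ the seller posts $p_t\in[0,1]$; the true sale indicator is $y_t=\mathbbm 1\{p_t\le v^\star\}$, the seller observes $\sigma_t\in\{0,1\}$, and round $t$ is corrupted if $\sigma_t\neq y_t$. Meta-algorithm: let $D=\lceil\log_2 T\rceil$. Consider the complete binary tree of intervals of depth $D$ with root $[0,1)$, where each non-leaf node $[L,R)$ has children $[L,M)$ and $[M,R)$, $M=(L+R)/2$; the depth-$D$ nodes are the leaves, and $\ell^\star$ is the unique leaf containing $v^\star$. The algorithm keeps a current node $I$, initially the root. If $I=[L,R)$ is not a leaf, it performs a safety check — post $L$ and observe $\sigma_L$, post $R$ and observe $\sigma_R$; the check fails if $\sigma_L=0$ or $\sigma_R=1$ (by convention the query at $L=0$ and the query at $R=1$ always count as passing). On failure $I$ becomes its parent; otherwise it posts $M$, observes $\sigma_M$, and $I$ becomes $[M,R)$ if $\sigma_M=1$ and $[L,M)$ if $\sigma_M=0$. If $I$ is a leaf, a commitment subroutine is run on $I$; it posts prices on consecutive rounds and may return FAIL, in which case $I$ becomes its parent. Search steps: each iteration at a non-leaf node (safety check plus possible midpoint query) is one search step; each call of the commitment subroutine at a leaf is one search step. A search step is honest if none of its rounds is corrupted, and corrupted otherwise. $I^q$ is the current node at the start of search step $q$, and $\Phi_q=\mathrm{dist}(I^q,\ell^\star)$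 is the length of the shortest path between $I^q$ and $\ell^\star$ in the tree. *)

theory Defs
  imports Complex_Main
begin

text \<open>Nodes of the complete binary tree of depth D are pairs (d, k) with d \<le> D and
  k < 2^d; node (d, k) is the interval [k / 2^d, (k+1) / 2^d).\<close>

type_synonym node = "nat \<times> nat"

definition depth_D :: "nat \<Rightarrow> nat" where
  "depth_D T = nat \<lceil>log 2 (real T)\<rceil>"

definition is_node :: "nat \<Rightarrow> node \<Rightarrow> bool" where
  "is_node D u \<longleftrightarrow> fst u \<le> D \<and> snd u < 2 ^ fst u"

definition lo :: "node \<Rightarrow> real" where
  "lo u = real (snd u) / 2 ^ fst u"

definition hi :: "node \<Rightarrow> real" where
  "hi u = real (Suc (snd u)) / 2 ^ fst u"

definition mid :: "node \<Rightarrow> real" where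
  "mid u = (lo u + hi u) / 2"

definition is_leaf :: "nat \<Rightarrow> node \<Rightarrow> bool" where
  "is_leaf D u \<longleftrightarrow> fst u = D"

definition parent :: "node \<Rightarrow> node" where
  "parent u = (fst u - 1, snd u div 2)"

definition left_child :: "node \<Rightarrow> node" where
  "left_child u = (Suc (fst u), 2 * snd u)"

definition right_child :: "node \<Rightarrow> node" where
  "right_child u = (Suc (fst u), 2 * snd u + 1)"

definition tree_adj :: "nat \<Rightarrow> node \<Rightarrow> node \<Rightarrow> bool" where
  "tree_adj D u v \<longleftrightarrow> is_node D u \<and> is_node D v \<and>
     ((0 < fst u \<and> v = parent u) \<or> (0 < fst v \<and> u = parent v))"

definition is_path :: "nat \<Rightarrow> node list \<Rightarrow> bool" where
  "is_path D ps \<longleftrightarrow> ps \<noteq> [] \<and> (\<forall>i. Suc i < length ps \<longrightarrow> tree_adj D (ps ! i) (ps ! Suc i))"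

definition tree_dist :: "nat \<Rightarrow> node \<Rightarrow> node \<Rightarrow> nat" where
  "tree_dist D u v = (LEAST n. \<exists>ps. is_path D ps \<and> length ps = Suc n \<and> hd ps = u \<and> last ps = v)"

definition leaf_of :: "nat \<Rightarrow> real \<Rightarrow> node" where
  "leaf_of D v = (D, nat \<lfloor>v * 2 ^ D\<rfloor>)"

definition sale :: "real \<Rightarrow> real \<Rightarrow> bool" where
  "sale vstar p \<longleftrightarrow> p \<le> vstar"

definition check_fails :: "node \<Rightarrow> bool \<Rightarrow> bool \<Rightarrow> bool" where
  "check_fails u sL sR \<longleftrightarrow> (lo u \<noteq> 0 \<and> \<not> sL) \<or> (hi u \<noteq> 1 \<and> sR)"

definition search_step :: "node \<Rightarrow> bool \<Rightarrow> bool \<Rightarrow> bool \<Rightarrow> node" where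
  "search_step u sL sR sM =
     (if check_fails u sL sR then parent u
      else if sM then right_child u else left_child u)"

text \<open>A non-leaf search step is honest if none of its posted rounds is corrupted:
  the observations at lo and hi are correct, and, if the midpoint is posted
  (check passes), the observation at mid is correct.\<close>
definition honest_nonleaf_step :: "real \<Rightarrow> node \<Rightarrow> bool \<Rightarrow> bool \<Rightarrow> bool \<Rightarrow> bool" where
  "honest_nonleaf_step vstar u sL sR sM \<longleftrightarrow>
     sL = sale vstar (lo u) \<and> sR = sale vstar (hi u) \<and>
     (\<not> check_fails u sL sR \<longrightarrow> sM = sale vstar (mid u))"

end

theory Submission
  imports Defs
begin

text \<open>Let u be a node, b a neighbour of u and S a set of nodes containing the target w but
  not u, such that every edge entering S ends at b. Then every path from u to w passes
  through b, so stepping from u to b decreases the tree distance to w by one.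

  An honest safety check at I passes exactly when v* lies in the interval of I, i.e. when
  the leaf of v* lies in the subtree of I. If it fails, take S to be the complement of
  that subtree, whose only entrance is the parent of I. If it passes, the honest midpoint
  query moves to the child c whose interval contains v*; take S to be the subtree of c,
  whose only entrance is c itself.\<close>

lemma is_path_iff_successively: "is_path D ps \<longleftrightarrow> ps \<noteq> [] \<and> successively (tree_adj D) ps"
  by (simp add: is_path_def successively_conv_nth)

lemma tree_adj_commute: "tree_adj D x y \<longleftrightarrow> tree_adj D y x"
  by (auto simp: tree_adj_def)

lemma is_path_not_Nil: "is_path D ps \<Longrightarrow> ps \<noteq> []"
  by (simp add: is_path_def)

lemma is_path_Cons: "is_path D (x # ps) \<longleftrightarrow> ps = [] \<or> tree_adj D x (hd ps) \<and> is_path D ps"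
  by (auto simp: is_path_iff_successively successively_Cons)

lemma is_path_rev [simp]: "is_path D (rev ps) \<longleftrightarrow> is_path D ps"
  by (simp add: is_path_iff_successively tree_adj_commute)

lemma is_path_glue:
  "is_path D xs \<Longrightarrow> is_path D ys \<Longrightarrow> last xs = hd ys \<Longrightarrow> is_path D (xs @ tl ys)"
  by (cases ys) (auto simp: is_path_iff_successively successively_append_iff successively_Cons)

lemma is_path_drop: "is_path D ps \<Longrightarrow> i < length ps \<Longrightarrow> is_path D (drop i ps)"
  by (auto simp: is_path_def)

lemma is_node_parent: "is_node D u \<Longrightarrow> 0 < fst u \<Longrightarrow> is_node D (parent u)"
  by (cases "fst u") (auto simp: is_node_def parent_def less_mult_imp_div_less)

lemma tree_adj_parent: "is_node D u \<Longrightarrow> 0 < fst u \<Longrightarrow> tree_adj D u (parent u)"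
  by (simp add: tree_adj_def is_node_parent)

lemma path_to_root: "is_node D x \<Longrightarrow> \<exists>ps. is_path D ps \<and> hd ps = x \<and> last ps = (0, 0)"
proof (induction "fst x" arbitrary: x)
  case 0
  then have "x = (0, 0)"
    by (auto simp: is_node_def prod_eq_iff)
  then show ?case
    by (intro exI[of _ "[x]"]) (simp add: is_path_Cons)
next
  case (Suc d)
  then have "is_node D (parent x)" "fst (parent x) = d" "tree_adj D x (parent x)"
    by (simp_all add: is_node_parent tree_adj_parent) (simp add: parent_def)
  moreover obtain ps where "is_path D ps" "hd ps = parent x" "last ps = (0, 0)"
    using Suc.hyps(1) calculation by metis
  ultimately show ?case
    by (intro exI[of _ "x # ps"]) (auto simp: is_path_Cons dest: is_path_not_Nil)
qed

lemma tree_connected: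
  assumes "is_node D x" "is_node D y"
  shows "\<exists>ps. is_path D ps \<and> hd ps = x \<and> last ps = y"
proof -
  obtain ps where ps: "is_path D ps" "hd ps = x" "last ps = (0, 0)"
    using path_to_root assms(1) by blast
  obtain qs where qs: "is_path D qs" "hd qs = y" "last qs = (0, 0)"
    using path_to_root assms(2) by blast
  define rs where "rs = rev qs"
  have "rs \<noteq> []" "is_path D rs" "last ps = hd rs" "last rs = y"
    using ps qs by (auto simp: rs_def hd_rev last_rev dest: is_path_not_Nil)
  then have "last (ps @ tl rs) = y"
    by (cases rs) auto
  with ps \<open>is_path D rs\<close> \<open>last ps = hd rs\<close> show ?thesis
    by (intro exI[of _ "ps @ tl rs"]) (auto simp: is_path_glue dest: is_path_not_Nil)
qed

lemma tree_dist_le_length: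
  assumes "is_path D ps"
  shows "tree_dist D (hd ps) (last ps) \<le> length ps - 1"
proof -
  have "length ps = Suc (length ps - 1)"
    using is_path_not_Nil[OF assms] by simp
  with assms show ?thesis
    unfolding tree_dist_def by (blast intro: Least_le)
qed

lemma shortest_path_exists:
  assumes "is_node D u" "is_node D w"
  shows "\<exists>ps. is_path D ps \<and> length ps = Suc (tree_dist D u w) \<and> hd ps = u \<and> last ps = w"
proof -
  obtain ps where "is_path D ps" "hd ps = u" "last ps = w"
    using tree_connected[OF assms] by blast
  moreover have "length ps = Suc (length ps - 1)"
    using \<open>is_path D ps\<close> by (simp add: is_path_not_Nil)
  ultimately have "\<exists>n ps. is_path D ps \<and> length ps = Suc n \<and> hd ps = u \<and> last ps = w"
    by blast
  then show ?thesis
    unfolding tree_dist_def by (rule LeastI_ex)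
qed

lemma path_enters_through_gate:
  assumes "is_path D ps" "hd ps \<notin> S" "last ps \<in> S"
    and gate: "\<And>x y. tree_adj D x y \<Longrightarrow> x \<notin> S \<Longrightarrow> y \<in> S \<Longrightarrow> y = b"
  shows "\<exists>i. 0 < i \<and> i < length ps \<and> ps ! i = b"
  using assms(1-3)
proof (induction ps)
  case Nil
  then show ?case by (simp add: is_path_def)
next
  case (Cons x xs)
  then have "xs \<noteq> []" "tree_adj D x (hd xs)" "is_path D xs"
    by (auto simp: is_path_Cons)
  show ?case
  proof (cases "hd xs \<in> S")
    case True
    then have "hd xs = b"
      using gate \<open>tree_adj D x (hd xs)\<close> Cons.prems(2) by simp
    with \<open>xs \<noteq> []\<close> show ?thesis
      by (intro exI[of _ 1]) (auto simp: hd_conv_nth)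
  next
    case False
    with Cons.IH obtain i where "0 < i" "i < length xs" "xs ! i = b"
      using \<open>is_path D xs\<close> \<open>xs \<noteq> []\<close> Cons.prems(3) by auto
    then show ?thesis
      by (intro exI[of _ "Suc i"]) auto
  qed
qed

lemma tree_dist_through_gate:
  assumes "tree_adj D u b" "is_node D w" "u \<notin> S" "w \<in> S"
    and gate: "\<And>x y. tree_adj D x y \<Longrightarrow> x \<notin> S \<Longrightarrow> y \<in> S \<Longrightarrow> y = b"
  shows "tree_dist D b w = tree_dist D u w - 1"
proof -
  have "is_node D u" "is_node D b"
    using assms(1) by (auto simp: tree_adj_def)
  obtain ps where ps: "is_path D ps" "length ps = Suc (tree_dist D u w)" "hd ps = u" "last ps = w"
    using shortest_path_exists[OF \<open>is_node D u\<close> \<open>is_node D w\<close>] by blast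
  have "hd ps \<notin> S" "last ps \<in> S"
    using ps(3,4) assms(3,4) by simp_all
  then have "\<exists>i. 0 < i \<and> i < length ps \<and> ps ! i = b"
    by (rule path_enters_through_gate[OF ps(1)]) (fact gate)
  then obtain i where i: "0 < i" "i < length ps" "ps ! i = b"
    by blast
  have "tree_dist D b w \<le> length (drop i ps) - 1"
    using tree_dist_le_length[OF is_path_drop[OF ps(1) i(2)]] i ps(4) by (simp add: hd_drop_conv_nth)
  then have upper: "tree_dist D b w \<le> tree_dist D u w - 1"
    using i ps(2) by simp
  obtain rs where rs: "is_path D rs" "length rs = Suc (tree_dist D b w)" "hd rs = b" "last rs = w"
    using shortest_path_exists[OF \<open>is_node D b\<close> \<open>is_node D w\<close>] by blast
  then have "is_path D (u # rs)"
    using assms(1) by (simp add: is_path_Cons)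
  then have "tree_dist D u w \<le> Suc (tree_dist D b w)"
    using tree_dist_le_length[of D "u # rs"] rs by (simp add: is_path_not_Nil)
  with upper show ?thesis
    by linarith
qed

definition descendant :: "node \<Rightarrow> node \<Rightarrow> bool" where
  "descendant u x \<longleftrightarrow> fst u \<le> fst x \<and> snd x div 2 ^ (fst x - fst u) = snd u"

lemma descendant_refl [simp]: "descendant u u"
  by (simp add: descendant_def)

lemma descendant_root: "is_node D x \<Longrightarrow> descendant (0, 0) x"
  by (simp add: descendant_def is_node_def)

lemma descendant_iff_parent:
  assumes "0 < fst y"
  shows "descendant u y \<longleftrightarrow> y = u \<or> descendant u (parent y)"
proof -
  obtain d k where y: "y = (Suc d, k)"
    using assms by (metis gr0_implies_Suc prod.collapse)
  have "k div 2 div 2 ^ (d - fst u) = k div 2 ^ (Suc d - fst u)" if "fst u \<le> d"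
    using that by (simp add: div_mult2_eq Suc_diff_le flip: mult.commute)
  then show ?thesis
    by (cases u) (auto simp: descendant_def parent_def y le_Suc_eq)
qed

lemma descendant_boundary_edge:
  assumes "tree_adj D x y" "descendant c x" "\<not> descendant c y"
  shows "x = c \<and> y = parent c"
  using assms by (auto simp: tree_adj_def descendant_iff_parent)

lemma is_node_leaf_of: "0 \<le> v \<Longrightarrow> v < 1 \<Longrightarrow> is_node D (leaf_of D v)"
  by (simp add: is_node_def leaf_of_def nat_less_iff floor_less_iff)

lemma descendant_leaf_of_iff:
  assumes "0 \<le> v" "fst u \<le> D"
  shows "descendant u (leaf_of D v) \<longleftrightarrow> lo u \<le> v \<and> v < hi u"
proof -
  obtain e j where u: "u = (e, j)"
    by force
  have "(2::real) ^ D = 2 ^ (D - e) * 2 ^ e"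
    using assms(2) u by (simp flip: power_add)
  then have "v * 2 ^ D / real_of_int (2 ^ (D - e)) = v * 2 ^ e"
    by simp
  then have "\<lfloor>v * 2 ^ D\<rfloor> div 2 ^ (D - e) = \<lfloor>v * 2 ^ e\<rfloor>"
    using floor_divide_real_eq_div[of "2 ^ (D - e)" "v * 2 ^ D"] by simp
  moreover have "nat \<lfloor>v * 2 ^ D\<rfloor> div 2 ^ (D - e) = nat (\<lfloor>v * 2 ^ D\<rfloor> div 2 ^ (D - e))"
    using assms(1) by (simp add: nat_div_distrib nat_power_eq)
  ultimately have "descendant u (leaf_of D v) \<longleftrightarrow> nat \<lfloor>v * 2 ^ e\<rfloor> = j"
    using assms(2) by (simp add: descendant_def leaf_of_def u)
  also have "\<dots> \<longleftrightarrow> \<lfloor>v * 2 ^ e\<rfloor> = int j"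
    using assms(1) by auto
  also have "\<dots> \<longleftrightarrow> real j \<le> v * 2 ^ e \<and> v * 2 ^ e < real j + 1"
    by (simp add: floor_eq_iff)
  also have "\<dots> \<longleftrightarrow> lo u \<le> v \<and> v < hi u"
    by (simp add: lo_def hi_def u field_simps)
  finally show ?thesis .
qed

lemma parent_left_child [simp]: "parent (left_child u) = u"
  by (simp add: parent_def left_child_def)

lemma parent_right_child [simp]: "parent (right_child u) = u"
  by (simp add: parent_def right_child_def)

lemma is_node_left_child: "is_node D u \<Longrightarrow> fst u < D \<Longrightarrow> is_node D (left_child u)"
  by (simp add: is_node_def left_child_def)

lemma is_node_right_child: "is_node D u \<Longrightarrow> fst u < D \<Longrightarrow> is_node D (right_child u)"
  by (simp add: is_node_def right_child_def)

lemma lo_left_child [simp]: "lo (left_child u) = lo u"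
  and hi_left_child [simp]: "hi (left_child u) = mid u"
  and lo_right_child [simp]: "lo (right_child u) = mid u"
  and hi_right_child [simp]: "hi (right_child u) = hi u"
  by (simp_all add: lo_def hi_def mid_def left_child_def right_child_def field_simps)

text \<open>The exemptions for the queries at 0 and 1 are harmless because 0 \<le> v < 1.\<close>

lemma honest_search_step:
  assumes "honest_nonleaf_step v u sL sR sM" "0 \<le> v" "v < 1"
  shows "search_step u sL sR sM =
    (if lo u \<le> v \<and> v < hi u then if mid u \<le> v then right_child u else left_child u
     else parent u)"
proof -
  have "check_fails u sL sR \<longleftrightarrow> \<not> (lo u \<le> v \<and> v < hi u)"
    using assms by (auto simp: honest_nonleaf_step_def check_fails_def sale_def)
  with assms(1) show ?thesis
    by (auto simp: search_step_def honest_nonleaf_step_def sale_def)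
qed

lemma tree_dist_parent_outside_subtree:
  assumes "is_node D u" "is_node D w" "\<not> descendant u w"
  shows "tree_dist D (parent u) w = tree_dist D u w - 1"
proof (rule tree_dist_through_gate[where S = "{x. \<not> descendant u x}"])
  have "u \<noteq> (0, 0)"
    using descendant_root[OF assms(2)] assms(3) by auto
  moreover have "fst u = 0 \<Longrightarrow> u = (0, 0)"
    using assms(1) by (auto simp: is_node_def prod_eq_iff)
  ultimately have "0 < fst u"
    by blast
  with assms(1) show "tree_adj D u (parent u)"
    by (rule tree_adj_parent)
  show "y = parent u" if "tree_adj D x y" "x \<notin> {x. \<not> descendant u x}" "y \<in> {x. \<not> descendant u x}"
    for x y
    using descendant_boundary_edge[OF that(1)] that(2,3) by simp
qed (use assms in auto)

lemma tree_dist_child_inside_subtree: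
  assumes "is_node D c" "0 < fst c" "is_node D w" "descendant c w"
  shows "tree_dist D c w = tree_dist D (parent c) w - 1"
proof (rule tree_dist_through_gate[where S = "{x. descendant c x}"])
  show "tree_adj D (parent c) c"
    using tree_adj_parent[OF assms(1,2)] by (simp add: tree_adj_commute)
  show "parent c \<notin> {x. descendant c x}"
    using assms(2) by (auto simp: descendant_def parent_def)
  show "y = c" if "tree_adj D x y" "x \<notin> {x. descendant c x}" "y \<in> {x. descendant c x}" for x y
    using descendant_boundary_edge[of D y x c] that by (simp add: tree_adj_commute)
qed (use assms in auto)

lemma tree_dist_honest_search_step:
  assumes "is_node D u" "fst u < D" "honest_nonleaf_step v u sL sR sM" "0 \<le> v" "v < 1"
  shows "tree_dist D (search_step u sL sR sM) (leaf_of D v) = tree_dist D u (leaf_of D v) - 1"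
proof -
  define l where "l = leaf_of D v"
  have l: "is_node D l"
    using is_node_leaf_of assms(4,5) by (simp add: l_def)
  have "tree_dist D (search_step u sL sR sM) l = tree_dist D u l - 1"
  proof (cases "lo u \<le> v \<and> v < hi u")
    case True
    define c where "c = (if mid u \<le> v then right_child u else left_child u)"
    have c: "is_node D c" "0 < fst c" "parent c = u" "lo c \<le> v \<and> v < hi c"
      using assms(1,2) True by (simp_all add: c_def is_node_left_child is_node_right_child)
        (simp add: left_child_def right_child_def)
    then have "descendant c l"
      using descendant_leaf_of_iff assms(4) by (simp add: l_def is_node_def)
    moreover have "search_step u sL sR sM = c"
      using honest_search_step[OF assms(3-5)] True by (simp add: c_def)
    ultimately show ?thesis
      using tree_dist_child_inside_subtree[OF c(1,2) l] c(3) by simp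
  next
    case False
    then have "\<not> descendant u l"
      using descendant_leaf_of_iff assms(2,4) by (simp add: l_def)
    moreover have "search_step u sL sR sM = parent u"
      using honest_search_step[OF assms(3-5)] False by simp
    ultimately show ?thesis
      using tree_dist_parent_outside_subtree[OF assms(1) l] by simp
  qed
  then show ?thesis
    by (simp add: l_def)
qed

theorem lemma3p1:
  fixes T :: nat and vstar :: real
    and I :: "nat \<Rightarrow> node" and sL sR sM :: "nat \<Rightarrow> bool" and q :: nat
  defines "D \<equiv> depth_D T"
  assumes "0 \<le> vstar" and "vstar < 1"
    and "is_node D (I q)" and "\<not> is_leaf D (I q)"
    and "I (Suc q) = search_step (I q) (sL q) (sR q) (sM q)"
    and "honest_nonleaf_step vstar (I q) (sL q) (sR q) (sM q)"
  shows "tree_dist D (I (Suc q)) (leaf_of D vstar) = tree_dist D (I q) (leaf_of D vstar) - 1"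
proof -
  have "fst (I q) < D"
    using assms(4,5) by (simp add: is_node_def is_leaf_def)
  with assms show ?thesis
    using tree_dist_honest_search_step by simp
qed

end
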